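(* Let $G$ be a graph without isolated vertices. Then $\partial\Gamma(G)=2$ if and only if either $G$ is the complete bipartite graph $K_{n,m}$ for some $n\ge 2$ and $m\ge 1$, or $G$ is a disjoint union of copies of $K_2$ (i.e. every component is a single edge).
   Context: A proper $k$-coloring of $G$ is a surjective map $c:V(G)\to\{1,\ldots,k\}$ with $c(u)\ne c(v)$ for every edge $uv$. A vertex of color $i$ is a Grundy vertex if it has, for every $j<i$, a neighbor of color $j$. A partial Grundy $k$-coloring is a proper $k$-coloring in which every color class contains at least one Grundy vertex; $\partial\Gamma(G)$ is the largest $k$ such that $G$ has a partial Grundy $k$-coloring. *)

theory Defs
  imports Main
begin

definition simple_graph :: "'a set \<Rightarrow> ('a \<Rightarrow> 'a \<Rightarrow> bool) \<Rightarrow> bool" where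
  "simple_graph V E \<longleftrightarrow> finite V \<and> V \<noteq> {} \<and>
     (\<forall>u v. E u v \<longrightarrow> u \<in> V \<and> v \<in> V) \<and>
     (\<forall>u v. E u v \<longrightarrow> E v u) \<and> (\<forall>v. \<not> E v v)"

definition no_isolated :: "'a set \<Rightarrow> ('a \<Rightarrow> 'a \<Rightarrow> bool) \<Rightarrow> bool" where
  "no_isolated V E \<longleftrightarrow> (\<forall>v\<in>V. \<exists>u\<in>V. E v u)"

definition proper_coloring :: "'a set \<Rightarrow> ('a \<Rightarrow> 'a \<Rightarrow> bool) \<Rightarrow> ('a \<Rightarrow> nat) \<Rightarrow> nat \<Rightarrow> bool" where
  "proper_coloring V E c k \<longleftrightarrow> c ` V = {1..k} \<and> (\<forall>u\<in>V. \<forall>v\<in>V. E u v \<longrightarrow> c u \<noteq> c v)"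

definition grundy_vertex :: "'a set \<Rightarrow> ('a \<Rightarrow> 'a \<Rightarrow> bool) \<Rightarrow> ('a \<Rightarrow> nat) \<Rightarrow> 'a \<Rightarrow> bool" where
  "grundy_vertex V E c v \<longleftrightarrow> v \<in> V \<and> (\<forall>j. 1 \<le> j \<and> j < c v \<longrightarrow> (\<exists>u\<in>V. E v u \<and> c u = j))"

definition partial_grundy_coloring :: "'a set \<Rightarrow> ('a \<Rightarrow> 'a \<Rightarrow> bool) \<Rightarrow> ('a \<Rightarrow> nat) \<Rightarrow> nat \<Rightarrow> bool" where
  "partial_grundy_coloring V E c k \<longleftrightarrow> proper_coloring V E c k \<and>
     (\<forall>i\<in>{1..k}. \<exists>v\<in>V. c v = i \<and> grundy_vertex V E c v)"

definition partial_grundy_number :: "'a set \<Rightarrow> ('a \<Rightarrow> 'a \<Rightarrow> bool) \<Rightarrow> nat" where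
  "partial_grundy_number V E = Max {k. \<exists>c. partial_grundy_coloring V E c k}"

definition is_complete_bipartite :: "'a set \<Rightarrow> ('a \<Rightarrow> 'a \<Rightarrow> bool) \<Rightarrow> nat \<Rightarrow> nat \<Rightarrow> bool" where
  "is_complete_bipartite V E n m \<longleftrightarrow> (\<exists>A B. A \<inter> B = {} \<and> A \<union> B = V \<and> card A = n \<and> card B = m \<and>
     (\<forall>u\<in>V. \<forall>v\<in>V. E u v \<longleftrightarrow> (u \<in> A \<and> v \<in> B) \<or> (u \<in> B \<and> v \<in> A)))"

definition disjoint_union_K2 :: "'a set \<Rightarrow> ('a \<Rightarrow> 'a \<Rightarrow> bool) \<Rightarrow> bool" where
  "disjoint_union_K2 V E \<longleftrightarrow> (\<forall>v\<in>V. \<exists>!u. u \<in> V \<and> E v u)"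

end

theory Submission
  imports Defs
begin

text \<open>A partial Grundy colouring of an induced subgraph extends greedily to the whole graph:
  each added vertex takes the least colour missing from its neighbourhood and thereby becomes a
  Grundy vertex of that colour. Hence \<open>\<partial>\<Gamma>(G) \<ge> 2\<close> as soon as G has an edge, and
  \<open>\<partial>\<Gamma>(G) \<ge> 3\<close> as soon as G contains a triangle, an induced \<open>P\<^sub>4\<close> or a path
  \<open>P\<^sub>3\<close> plus a suitably separated edge. If none of these occurs and some vertex x has two
  neighbours, G is complete bipartite between the neighbourhood of x and the rest.
  Conversely, a Grundy vertex of colour 3 needs neighbours of colours 1 and 2: impossible in a
  matching, and in \<open>K\<^sub>n\<^sub>,\<^sub>m\<close> these neighbours lie on one side, leaving no room for an
  adjacent pair coloured 2 and 1.\<close>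

definition induced :: "('a \<Rightarrow> 'a \<Rightarrow> bool) \<Rightarrow> 'a set \<Rightarrow> 'a \<Rightarrow> 'a \<Rightarrow> bool" where
  "induced E S u v \<longleftrightarrow> u \<in> S \<and> v \<in> S \<and> E u v"

lemma simple_graphD:
  assumes "simple_graph V E"
  shows "finite V" and "E u v \<Longrightarrow> u \<in> V" and "E u v \<Longrightarrow> v \<in> V"
    and "E u v \<Longrightarrow> E v u" and "\<not> E v v" and "symp E" and "irreflp E"
  using assms by (auto simp: simple_graph_def symp_def irreflp_def)

lemma induced_eq_if_simple_graph:
  assumes "simple_graph V E"
  shows "induced E V = E"
  using simple_graphD(2,3)[OF assms] by (auto simp: induced_def fun_eq_iff)

lemma grundy_vertex_induced_mono:
  assumes "grundy_vertex S (induced E S) c v" and "S \<subseteq> T" and "\<forall>u\<in>S. c' u = c u"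
  shows "grundy_vertex T (induced E T) c' v"
  using assms unfolding grundy_vertex_def induced_def by (metis subsetD)

lemma least_missing_colour:
  fixes c :: "'a \<Rightarrow> nat"
  assumes "\<forall>u\<in>N. c u \<le> k"
  obtains m where "1 \<le> m" "m \<le> Suc k" "\<forall>u\<in>N. c u \<noteq> m"
    and "\<And>j. 1 \<le> j \<Longrightarrow> j < m \<Longrightarrow> \<exists>u\<in>N. c u = j"
proof -
  define free where "free j \<longleftrightarrow> 1 \<le> j \<and> (\<forall>u\<in>N. c u \<noteq> j)" for j
  have "free (Suc k)"
    using assms by (auto simp: free_def)
  then have "free (LEAST j. free j)" and "(LEAST j. free j) \<le> Suc k"
    by (rule LeastI, rule Least_le)
  moreover have "\<And>j. j < (LEAST j. free j) \<Longrightarrow> \<not> free j"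
    by (rule not_less_Least)
  ultimately show thesis
    by (intro that[of "LEAST j. free j"]) (auto simp: free_def)
qed

lemma partial_grundy_coloring_induced_insert:
  assumes sym: "symp E" and irr: "irreflp E" and w: "w \<notin> S"
    and pgc: "partial_grundy_coloring S (induced E S) c k"
  shows "\<exists>c' k'. k \<le> k' \<and> partial_grundy_coloring (insert w S) (induced E (insert w S)) c' k'"
proof -
  let ?S' = "insert w S"
  have img: "c ` S = {1..k}"
    using pgc by (simp add: partial_grundy_coloring_def proper_coloring_def)
  then have "\<forall>u\<in>{u \<in> S. E w u}. c u \<le> k"
    by auto
  then obtain m where m: "1 \<le> m" "m \<le> Suc k" and free: "\<forall>u\<in>{u \<in> S. E w u}. c u \<noteq> m"
    and below: "\<And>j. 1 \<le> j \<Longrightarrow> j < m \<Longrightarrow> \<exists>u\<in>{u \<in> S. E w u}. c u = j"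
    using least_missing_colour by blast
  define c' where "c' = c(w := m)"
  have agree: "\<forall>u\<in>S. c' u = c u"
    using w by (simp add: c'_def)
  have "c' ` ?S' = insert m (c' ` S)"
    using w by (simp add: c'_def)
  also have "c' ` S = c ` S"
    using agree by (auto intro: image_cong)
  also have "insert m (c ` S) = {1..max k m}"
    using img m by (cases "m \<le> k") (auto simp: max_def le_Suc_eq atLeastAtMostSuc_conv)
  finally have img': "c' ` ?S' = {1..max k m}" .
  have proper: "c' u \<noteq> c' v" if "induced E ?S' u v" for u v
    using that pgc free irr sym w
    by (auto simp: c'_def induced_def partial_grundy_coloring_def proper_coloring_def
        irreflp_def symp_def)
  have grundy: "\<exists>v\<in>?S'. c' v = i \<and> grundy_vertex ?S' (induced E ?S') c' v"
    if i: "i \<in> {1..max k m}" for i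
  proof (cases "i \<le> k")
    case True
    then obtain v where "v \<in> S" "c v = i" "grundy_vertex S (induced E S) c v"
      using pgc i unfolding partial_grundy_coloring_def by (meson atLeastAtMost_iff)
    then show ?thesis
      using grundy_vertex_induced_mono[of S E c v ?S' c'] agree by auto
  next
    case False
    then have "i = m"
      using i m by auto
    moreover have "grundy_vertex ?S' (induced E ?S') c' w"
      using below w by (fastforce simp: grundy_vertex_def induced_def c'_def)
    ultimately show ?thesis
      by (auto simp: c'_def)
  qed
  have "partial_grundy_coloring ?S' (induced E ?S') c' (max k m)"
    using img' proper grundy by (auto simp: partial_grundy_coloring_def proper_coloring_def)
  then show ?thesis
    by (intro exI[of _ c'] exI[of _ "max k m"]) simp
qed

lemma partial_grundy_coloring_induced_extend:
  assumes "symp E" and "irreflp E" and "finite T"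
    and "partial_grundy_coloring S (induced E S) c k"
  shows "\<exists>c' k'. k \<le> k' \<and> partial_grundy_coloring (S \<union> T) (induced E (S \<union> T)) c' k'"
  using \<open>finite T\<close>
proof (induction T)
  case empty
  show ?case
    using assms(4) by auto
next
  case (insert w T)
  then obtain c' k' where "k \<le> k'"
    and pgc: "partial_grundy_coloring (S \<union> T) (induced E (S \<union> T)) c' k'"
    by blast
  show ?case
  proof (cases "w \<in> S \<union> T")
    case True
    then show ?thesis
      using \<open>k \<le> k'\<close> pgc by (auto simp: insert_absorb)
  next
    case False
    then show ?thesis
      using partial_grundy_coloring_induced_insert[OF assms(1,2) False pgc] \<open>k \<le> k'\<close>
      by (auto intro: le_trans)
  qed
qed

lemma partial_grundy_coloring_of_induced:
  assumes sg: "simple_graph V E" and "S \<subseteq> V"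
    and "partial_grundy_coloring S (induced E S) c k"
  shows "\<exists>c' k'. k \<le> k' \<and> partial_grundy_coloring V E c' k'"
proof -
  have "finite (V - S)"
    using simple_graphD(1)[OF sg] by simp
  then obtain c' k' where "k \<le> k'"
    and "partial_grundy_coloring (S \<union> (V - S)) (induced E (S \<union> (V - S))) c' k'"
    using partial_grundy_coloring_induced_extend[OF simple_graphD(6,7)[OF sg]] assms(3) by blast
  moreover have "S \<union> (V - S) = V"
    using assms(2) by auto
  ultimately show ?thesis
    using induced_eq_if_simple_graph[OF sg] by auto
qed

lemma partial_grundy_coloring_le_card:
  assumes "finite V" and "partial_grundy_coloring V E c k"
  shows "k \<le> card V"
proof -
  have "c ` V = {1..k}"
    using assms(2) by (simp add: partial_grundy_coloring_def proper_coloring_def)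
  then show ?thesis
    using card_image_le[OF assms(1), of c] by simp
qed

lemma partial_grundy_number_ge:
  assumes "finite V" and "partial_grundy_coloring V E c k"
  shows "k \<le> partial_grundy_number V E"
proof -
  have "{k. \<exists>c. partial_grundy_coloring V E c k} \<subseteq> {..card V}"
    using partial_grundy_coloring_le_card[OF assms(1)] by auto
  then have "finite {k. \<exists>c. partial_grundy_coloring V E c k}"
    by (rule finite_subset) simp
  moreover have "k \<in> {k. \<exists>c. partial_grundy_coloring V E c k}"
    using assms(2) by blast
  ultimately show ?thesis
    unfolding partial_grundy_number_def by (rule Max_ge)
qed

lemma partial_grundy_number_eqI:
  assumes "partial_grundy_coloring V E c k"
    and "\<And>c' k'. partial_grundy_coloring V E c' k' \<Longrightarrow> k' \<le> k"
  shows "partial_grundy_number V E = k"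
proof -
  have bounded: "{k. \<exists>c. partial_grundy_coloring V E c k} \<subseteq> {..k}"
    using assms(2) by blast
  show ?thesis
    unfolding partial_grundy_number_def
  proof (rule Max_eqI)
    show "finite {k. \<exists>c. partial_grundy_coloring V E c k}"
      using bounded by (rule finite_subset) simp
  qed (use bounded assms(1) in auto)
qed

lemma partial_grundy_coloring_ge2_if_edge:
  assumes sg: "simple_graph V E" and e: "E u v"
  shows "\<exists>c k. 2 \<le> k \<and> partial_grundy_coloring V E c k"
proof -
  define f where "f x = (if x = u then 1 else 2 :: nat)" for x
  have uv: "u \<noteq> v" "E v u" "\<not> E u u" "\<not> E v v"
    using e simple_graphD[OF sg] by auto
  have "{1..2::nat} = {1, 2}"
    by auto
  then have "partial_grundy_coloring {u, v} (induced E {u, v}) f 2"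
    using uv e
    by (auto simp: partial_grundy_coloring_def proper_coloring_def grundy_vertex_def
        induced_def f_def)
  moreover have "{u, v} \<subseteq> V"
    using e simple_graphD(2,3)[OF sg] by blast
  ultimately show ?thesis
    using partial_grundy_coloring_of_induced[OF sg] by blast
qed

text \<open>Colouring x with 3, p and r with 1, and q and q' with 2 gives a partial Grundy
  3-colouring of the subgraph induced on these vertices (q = q' and p = r are allowed).\<close>
definition grundy3_configuration :: "('a \<Rightarrow> 'a \<Rightarrow> bool) \<Rightarrow> 'a \<Rightarrow> 'a \<Rightarrow> 'a \<Rightarrow> 'a \<Rightarrow> 'a \<Rightarrow> bool" where
  "grundy3_configuration E x p q q' r \<longleftrightarrow>
     E x p \<and> E x q \<and> E q' r \<and> \<not> E p r \<and> \<not> E q q' \<and> x \<notin> {q', r} \<and> {p, r} \<inter> {q, q'} = {}"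

lemma partial_grundy_coloring_ge3_if_configuration:
  assumes sg: "simple_graph V E" and conf: "grundy3_configuration E x p q q' r"
  shows "\<exists>c k. 3 \<le> k \<and> partial_grundy_coloring V E c k"
proof -
  let ?S = "{x, p, q, q', r}"
  define f where "f v = (if v = x then 3 else if v \<in> {p, r} then 1 else 2 :: nat)" for v
  have edges: "E x p" "E x q" "E q' r" "\<not> E p r" "\<not> E q q'"
    and distinct: "x \<notin> {p, q, q', r}" "{p, r} \<inter> {q, q'} = {}"
    using conf simple_graphD(5)[OF sg] by (auto simp: grundy3_configuration_def)
  have colours: "f x = 3" "f p = 1" "f r = 1" "f q = 2" "f q' = 2"
    using distinct by (auto simp: f_def)
  have "f ` ?S = {3, 1, 2, 2, 1}"
    by (simp add: colours)
  also have "\<dots> = {1..3}"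
    by auto
  finally have "f ` ?S = {1..3}" .
  moreover have "f u \<noteq> f v" if "induced E ?S u v" for u v
    using that edges distinct simple_graphD(4,5)[OF sg] by (auto simp: induced_def f_def)
  moreover have "grundy_vertex ?S (induced E ?S) f p" "grundy_vertex ?S (induced E ?S) f q'"
    "grundy_vertex ?S (induced E ?S) f x"
    using edges colours by (auto simp: grundy_vertex_def induced_def less_Suc_eq)
  ultimately have "partial_grundy_coloring ?S (induced E ?S) f 3"
    using colours
    by (auto simp: partial_grundy_coloring_def proper_coloring_def intro: bexI[of _ p])
  moreover have "?S \<subseteq> V"
    using edges simple_graphD(2,3)[OF sg] by blast
  ultimately show ?thesis
    using partial_grundy_coloring_of_induced[OF sg] by blast
qed

lemma no_triangle_if_no_grundy3_configuration:
  assumes sg: "simple_graph V E" and nc: "\<And>x p q q' r. \<not> grundy3_configuration E x p q q' r"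
    and "E a b" and "E b c"
  shows "\<not> E a c"
proof
  assume "E a c"
  then have "grundy3_configuration E a c b b c"
    using assms(3,4) simple_graphD(5)[OF sg] by (auto simp: grundy3_configuration_def)
  then show False
    using nc by blast
qed

lemma adjacent_ends_if_no_grundy3_configuration:
  assumes sg: "simple_graph V E" and nc: "\<And>x p q q' r. \<not> grundy3_configuration E x p q q' r"
    and "E a b" and "E b c" and "E c d" and "a \<noteq> c" and "b \<noteq> d" and "a \<noteq> d"
  shows "E a d"
proof (rule ccontr)
  assume "\<not> E a d"
  then have "grundy3_configuration E c d b b a"
    using assms(3-8) simple_graphD(4,5)[OF sg] by (auto simp: grundy3_configuration_def)
  then show False
    using nc by blast
qed

lemma adjacent_to_all_neighbours_if_adjacent_to_one:
  assumes sg: "simple_graph V E" and nc: "\<And>x p q q' r. \<not> grundy3_configuration E x p q q' r"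
    and "b \<noteq> x" and "\<not> E x b" and "E b a'" and "E x a'" and "E x a"
  shows "E b a"
proof (cases "a = a'")
  case False
  moreover have "E a' x" "b \<noteq> a"
    using assms(4,6,7) simple_graphD(4)[OF sg] by auto
  ultimately show ?thesis
    using adjacent_ends_if_no_grundy3_configuration[OF sg nc, of b a' x a] assms(3,5,7) by auto
qed (use assms(5) in simp)

lemma adjacent_to_some_neighbour:
  assumes sg: "simple_graph V E" and ni: "no_isolated V E"
    and nc: "\<And>x p q q' r. \<not> grundy3_configuration E x p q q' r"
    and y: "E x y" and z: "E x z" "y \<noteq> z" and b: "b \<in> V" "b \<noteq> x" "\<not> E x b"
  shows "\<exists>a. E x a \<and> E b a"
proof (rule ccontr)
  assume none: "\<nexists>a. E x a \<and> E b a"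
  obtain u where u: "E b u"
    using ni b(1) by (auto simp: no_isolated_def)
  have "\<not> E x u" "u \<noteq> x" "\<not> E z b" "\<not> E b b"
    using none u z b(3) simple_graphD(4,5)[OF sg] by auto
  moreover have "\<not> E y u"
  proof
    assume "E y u"
    then have "E b x"
      using adjacent_ends_if_no_grundy3_configuration[OF sg nc, of b u y x] u y b(2,3) \<open>u \<noteq> x\<close>
        simple_graphD(4)[OF sg] by metis
    then show False
      using b(3) simple_graphD(4)[OF sg] by blast
  qed
  ultimately have "grundy3_configuration E x y z b u"
    using y z u b(2,3) by (auto simp: grundy3_configuration_def)
  then show False
    using nc by blast
qed

lemma complete_bipartite_if_no_grundy3_configuration:
  assumes sg: "simple_graph V E" and ni: "no_isolated V E"
    and nc: "\<And>x p q q' r. \<not> grundy3_configuration E x p q q' r"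
    and not_matching: "\<not> disjoint_union_K2 V E"
  shows "\<exists>n m. 2 \<le> n \<and> 1 \<le> m \<and> is_complete_bipartite V E n m"
proof -
  obtain x y z where x: "x \<in> V" and y: "E x y" and z: "E x z" "y \<noteq> z"
    using not_matching ni simple_graphD(3)[OF sg]
    by (auto simp: disjoint_union_K2_def no_isolated_def)
  define A where "A = {v \<in> V. E x v}"
  have x_notin_A: "x \<notin> A"
    using simple_graphD(5)[OF sg] by (simp add: A_def)
  have across: "E b a" if a: "a \<in> A" and b: "b \<in> V - A" for a b
  proof (cases "b = x")
    case False
    then obtain a' where "E x a'" "E b a'"
      using adjacent_to_some_neighbour[OF sg ni nc y z] b by (auto simp: A_def)
    then show ?thesis
      using adjacent_to_all_neighbours_if_adjacent_to_one[OF sg nc False] a b by (auto simp: A_def)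
  qed (use a in \<open>simp add: A_def\<close>)
  have y_in_A: "y \<in> A" and z_in_A: "z \<in> A"
    using y z simple_graphD(3)[OF sg] by (auto simp: A_def)
  have "E u v \<longleftrightarrow> (u \<in> A \<and> v \<in> V - A) \<or> (u \<in> V - A \<and> v \<in> A)" if "u \<in> V" "v \<in> V" for u v
  proof
    assume uv: "E u v"
    have "\<not> (u \<in> A \<and> v \<in> A)"
      using no_triangle_if_no_grundy3_configuration[OF sg nc, of x u v] uv by (auto simp: A_def)
    moreover have "\<not> (u \<in> V - A \<and> v \<in> V - A)"
      using no_triangle_if_no_grundy3_configuration[OF sg nc, of u v y] uv across[OF y_in_A] by blast
    ultimately show "(u \<in> A \<and> v \<in> V - A) \<or> (u \<in> V - A \<and> v \<in> A)"
      using that by blast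
  qed (use across simple_graphD(4)[OF sg] in blast)
  then have "is_complete_bipartite V E (card A) (card (V - A))"
    unfolding is_complete_bipartite_def by (intro exI[of _ A] exI[of _ "V - A"]) (auto simp: A_def)
  moreover have "2 \<le> card A"
    using card_mono[of A "{y, z}"] y_in_A z_in_A z(2) simple_graphD(1)[OF sg] by (simp add: A_def)
  moreover have "1 \<le> card (V - A)"
    using x x_notin_A simple_graphD(1)[OF sg] by (auto simp: Suc_le_eq card_gt_0_iff)
  ultimately show ?thesis
    by blast
qed

lemma complete_bipartite_sides:
  assumes "is_complete_bipartite V E n m"
  obtains A where "\<And>u v. u \<in> V \<Longrightarrow> v \<in> V \<Longrightarrow> E u v \<longleftrightarrow> (u \<in> A \<longleftrightarrow> v \<notin> A)"
  using assms unfolding is_complete_bipartite_def by (metis Un_iff disjoint_iff)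

lemma partial_grundy_coloring_obtain_grundy_vertex:
  assumes "partial_grundy_coloring V E c k" and "1 \<le> i" and "i \<le> k"
  obtains v where "v \<in> V" and "c v = i" and "\<And>j. 1 \<le> j \<Longrightarrow> j < i \<Longrightarrow> \<exists>u\<in>V. E v u \<and> c u = j"
  using assms unfolding partial_grundy_coloring_def grundy_vertex_def by fastforce

lemma partial_grundy_coloring_obtain_colour3_vertex:
  assumes "partial_grundy_coloring V E c k" and "3 \<le> k"
  obtains v p1 p2 where "v \<in> V" "p1 \<in> V" "p2 \<in> V" "E v p1" "E v p2" "c p1 = 1" "c p2 = 2"
proof -
  obtain v where "v \<in> V" "c v = 3" and nbs: "\<And>j. 1 \<le> j \<Longrightarrow> j < 3 \<Longrightarrow> \<exists>u\<in>V. E v u \<and> c u = j"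
    by (rule partial_grundy_coloring_obtain_grundy_vertex[OF assms(1), of 3]) (use assms(2) in auto)
  with nbs[of 1] nbs[of 2] show thesis
    using that by fastforce
qed

lemma partial_grundy_coloring_le2_if_complete_bipartite:
  assumes "is_complete_bipartite V E n m" and pgc: "partial_grundy_coloring V E c k"
  shows "k \<le> 2"
proof (rule ccontr)
  assume "\<not> k \<le> 2"
  obtain A where sides: "\<And>u v. u \<in> V \<Longrightarrow> v \<in> V \<Longrightarrow> E u v \<longleftrightarrow> (u \<in> A \<longleftrightarrow> v \<notin> A)"
    using complete_bipartite_sides[OF assms(1)] by blast
  obtain v p1 p2 where "v \<in> V" "p1 \<in> V" "p2 \<in> V" "E v p1" "E v p2" "c p1 = 1" "c p2 = 2"
    by (rule partial_grundy_coloring_obtain_colour3_vertex[OF pgc]) (use \<open>\<not> k \<le> 2\<close> in auto)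
  moreover obtain w where "w \<in> V" "c w = 2" and nbs: "\<And>j. 1 \<le> j \<Longrightarrow> j < 2 \<Longrightarrow> \<exists>u\<in>V. E w u \<and> c u = j"
    by (rule partial_grundy_coloring_obtain_grundy_vertex[OF pgc, of 2]) (use \<open>\<not> k \<le> 2\<close> in auto)
  moreover obtain u where "u \<in> V" "E w u" "c u = 1"
    using nbs[of 1] by auto
  moreover have "c a \<noteq> c b" if "a \<in> V" "b \<in> V" "E a b" for a b
    using pgc that by (simp add: partial_grundy_coloring_def proper_coloring_def)
  \<comment> \<open>w lies on the side of p2 and u on the side of p1, which is the same side, yet E w u.\<close>
  ultimately show False
    using sides by metis
qed

lemma partial_grundy_coloring_le2_if_disjoint_union_K2:
  assumes "disjoint_union_K2 V E" and pgc: "partial_grundy_coloring V E c k"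
  shows "k \<le> 2"
proof (rule ccontr)
  assume "\<not> k \<le> 2"
  obtain v p1 p2 where "v \<in> V" "p1 \<in> V" "p2 \<in> V" "E v p1" "E v p2" "c p1 = 1" "c p2 = 2"
    by (rule partial_grundy_coloring_obtain_colour3_vertex[OF pgc]) (use \<open>\<not> k \<le> 2\<close> in auto)
  then show False
    using assms(1) by (force simp: disjoint_union_K2_def)
qed

theorem mainTheorem4:
  fixes V :: "'a set" and E :: "'a \<Rightarrow> 'a \<Rightarrow> bool"
  assumes "simple_graph V E" and "no_isolated V E"
  shows "partial_grundy_number V E = 2 \<longleftrightarrow>
           ((\<exists>n m. n \<ge> 2 \<and> m \<ge> 1 \<and> is_complete_bipartite V E n m) \<or> disjoint_union_K2 V E)"
proof
  assume two: "partial_grundy_number V E = 2"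
  show "(\<exists>n m. n \<ge> 2 \<and> m \<ge> 1 \<and> is_complete_bipartite V E n m) \<or> disjoint_union_K2 V E"
  proof (rule ccontr)
    assume "\<not> ?thesis"
    then obtain x p q q' r where "grundy3_configuration E x p q q' r"
      using complete_bipartite_if_no_grundy3_configuration[OF assms] by blast
    then obtain c k where "3 \<le> k" and "partial_grundy_coloring V E c k"
      using partial_grundy_coloring_ge3_if_configuration[OF assms(1)] by blast
    then show False
      using partial_grundy_number_ge[OF simple_graphD(1)[OF assms(1)]] two by fastforce
  qed
next
  assume "(\<exists>n m. n \<ge> 2 \<and> m \<ge> 1 \<and> is_complete_bipartite V E n m) \<or> disjoint_union_K2 V E"
  then have le2: "k \<le> 2" if "partial_grundy_coloring V E c k" for c k
    using that partial_grundy_coloring_le2_if_complete_bipartite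
      partial_grundy_coloring_le2_if_disjoint_union_K2 by blast
  obtain u v where "E u v"
    using assms unfolding simple_graph_def no_isolated_def by blast
  then obtain c k where "2 \<le> k" and pgc: "partial_grundy_coloring V E c k"
    using partial_grundy_coloring_ge2_if_edge[OF assms(1)] by blast
  with le2 have "k = 2"
    by fastforce
  with pgc le2 show "partial_grundy_number V E = 2"
    by (blast intro: partial_grundy_number_eqI)
qed

end
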